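(* Let $\mu$ be a $(C,\gamma)$-absolutely decaying measure on $\mathbb{R}$, let $K=\operatorname{supp}\mu$, and let $\alpha$ satisfy $$0<\alpha \le \frac14\left( \frac{1}{3C} \right)^{1/\gamma}.$$ Then for every bi-Lipschitz map $\varphi:\mathbb{R}\to\mathbb{R}$, every sequence $\mathcal Y=(y_n)_{n\in\mathbb{N}}$ of points of $\mathbb{T}=\mathbb{R}/\mathbb{Z}$, and every lacunary sequence $\mathcal T=(t_n)_{n\in\mathbb{N}}$ of positive reals, the set $\varphi\big(\tilde E(\mathcal T,\mathcal Y)\big)$ is $\alpha$-winning on $K$.
   Context: Balls are closed: $B(x,\rho)=\{z: d(x,z)\le\rho\}$. A locally finite Borel measure $\mu$ on $\mathbb{R}$ is $(C,\gamma)$-absolutely decaying ($C,\gamma>0$) if there is $\rho_0>0$ such that for all $0<\rho\le\rho_0$, all $x\in\operatorname{supp}\mu$, all $y\in\mathbb{R}$ and all $\varepsilon>0$: $\mu(B(x,\rho)\cap B(y,\varepsilon\rho))<C\varepsilon^\gamma\mu(B(x,\rho))$. A sequence $(t_n)$ of positive reals is lacunary if $\inf_n t_{n+1}/t_n>1$. With $\pi:\mathbb{R}\to\mathbb{T}$ the projection $x\mapsto x \bmod 1$ and $d$ the usual distance on $\mathbb{T}$, $\tilde E(\mathcal T,\mathcal Y)=\{x\in\mathbb{R}: \inf_{n\in\mathbb{N}} d(\pi(t_nx),y_n)>0\}$. A map $\varphi$ is bi-Lipschitz if there is $L\ge1$ with $L^{-1}\le|\varphi(x)-\varphi(y)|/|x-y|\le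 L$ for all $x\ne y$. Schmidt's game on a complete metric space $(X,d)$ with parameters $0<\alpha,\beta<1$ and target set $S\subset X$: on $\Omega=X\times\mathbb{R}_+$ write $(x_2,\rho_2)\le_s(x_1,\rho_1)$ if $\rho_2+d(x_1,x_2)\le\rho_1$. Bob picks $\omega_1=(x_1,\rho_1)$; then Alice and Bob alternately pick $\omega_k'=(x_k',\rho_k')\le_s\omega_k$ with $\rho_k'=\alpha\rho_k$ and $\omega_{k+1}=(x_{k+1},\rho_{k+1})\le_s\omega_k'$ with $\rho_{k+1}=\beta\rho_k'$. The nested balls $B(\omega_k)$ intersect in a single point $x_\infty$; Alice wins if $x_\infty\in S$. $S$ is $(\alpha,\beta)$-winning if Alice has a strategy that wins against every play of Bob, and $\alpha$-winning if it is $(\alpha,\beta)$-winning for every $\beta\in(0,1)$. For a closed $K\subset\mathbb{R}$, a set $S\subset\mathbb{R}$ is $\alpha$-winning on $K$ if $S\cap K$ is $\alpha$-winning for the game played on the metric space $K$ with the metric induced from $\mathbb{R}$ (i.e. all centers must lie in $K$). *)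

theory Defs
  imports "HOL-Analysis.Analysis"
begin

definition locally_finite_borel :: "real measure \<Rightarrow> bool" where
  "locally_finite_borel \<mu> \<longleftrightarrow> sets \<mu> = sets borel \<and>
     (\<forall>x. \<exists>U. open U \<and> x \<in> U \<and> emeasure \<mu> U < \<infinity>)"

definition msupp :: "real measure \<Rightarrow> real set" where
  "msupp \<mu> = {x. \<forall>U. open U \<and> x \<in> U \<longrightarrow> emeasure \<mu> U > 0}"

definition abs_decaying :: "real measure \<Rightarrow> real \<Rightarrow> real \<Rightarrow> bool" where
  "abs_decaying \<mu> C \<gamma> \<longleftrightarrow> locally_finite_borel \<mu> \<and> C > 0 \<and> \<gamma> > 0 \<and>
     (\<exists>\<rho>0>0. \<forall>\<rho> x y \<epsilon>. 0 < \<rho> \<and> \<rho> \<le> \<rho>0 \<and> x \<in> msupp \<mu> \<and> \<epsilon> > 0 \<longrightarrow>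
        emeasure \<mu> (cball x \<rho> \<inter> cball y (\<epsilon> * \<rho>))
          < ennreal (C * \<epsilon> powr \<gamma>) * emeasure \<mu> (cball x \<rho>))"

definition lacunary :: "(nat \<Rightarrow> real) \<Rightarrow> bool" where
  "lacunary t \<longleftrightarrow> (\<forall>n. t n > 0) \<and> (INF n. t (Suc n) / t n) > 1"

text \<open>Distance on the torus T = R/Z between the classes of two reals.\<close>
definition tdist :: "real \<Rightarrow> real \<Rightarrow> real" where
  "tdist a b = (INF k::int. \<bar>a - b - of_int k\<bar>)"

text \<open>The set tilde E(T,Y); the points y n of the torus are represented by reals.\<close>
definition Etilde :: "(nat \<Rightarrow> real) \<Rightarrow> (nat \<Rightarrow> real) \<Rightarrow> real set" where
  "Etilde t y = {x. (INF n. tdist (t n * x) (y n)) > 0}"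

definition bi_lipschitz :: "(real \<Rightarrow> real) \<Rightarrow> bool" where
  "bi_lipschitz \<phi> \<longleftrightarrow> (\<exists>L\<ge>1. \<forall>x y. x \<noteq> y \<longrightarrow>
      1 / L \<le> \<bar>\<phi> x - \<phi> y\<bar> / \<bar>x - y\<bar> \<and> \<bar>\<phi> x - \<phi> y\<bar> / \<bar>x - y\<bar> \<le> L)"

text \<open>Schmidt's game on the closed set K (metric induced from R).  Moves are
  pairs (center, radius).  Bob's moves are b 0, b 1, ...; Alice's strategy sigma
  maps the list of Bob's moves so far [b 0, ..., b k] to her move a k.\<close>
definition bob_legal :: "real set \<Rightarrow> real \<Rightarrow> (nat \<Rightarrow> real \<times> real) \<Rightarrow> (nat \<Rightarrow> real \<times> real) \<Rightarrow> nat \<Rightarrow> bool" where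
  "bob_legal K \<beta> a b k \<longleftrightarrow> fst (b 0) \<in> K \<and> snd (b 0) > 0 \<and>
     (\<forall>j<k. fst (b (Suc j)) \<in> K \<and> snd (b (Suc j)) = \<beta> * snd (a j) \<and>
            snd (b (Suc j)) + \<bar>fst (a j) - fst (b (Suc j))\<bar> \<le> snd (a j))"

definition alice_legal :: "real set \<Rightarrow> real \<Rightarrow> (nat \<Rightarrow> real \<times> real) \<Rightarrow> (nat \<Rightarrow> real \<times> real) \<Rightarrow> nat \<Rightarrow> bool" where
  "alice_legal K \<alpha> a b k \<longleftrightarrow> fst (a k) \<in> K \<and> snd (a k) = \<alpha> * snd (b k) \<and>
     snd (a k) + \<bar>fst (b k) - fst (a k)\<bar> \<le> snd (b k)"

definition winning_ab_on :: "real set \<Rightarrow> real \<Rightarrow> real \<Rightarrow> real set \<Rightarrow> bool" where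
  "winning_ab_on K \<alpha> \<beta> S \<longleftrightarrow>
     (\<exists>\<sigma> :: (real \<times> real) list \<Rightarrow> real \<times> real. \<forall>b :: nat \<Rightarrow> real \<times> real.
        let a = (\<lambda>k. \<sigma> (map b [0..<Suc k])) in
        (\<forall>k. bob_legal K \<beta> a b k \<longrightarrow> alice_legal K \<alpha> a b k) \<and>
        ((\<forall>k. bob_legal K \<beta> a b k) \<longrightarrow>
           (\<forall>x\<in>K. (\<forall>k. \<bar>x - fst (b k)\<bar> \<le> snd (b k)) \<longrightarrow> x \<in> S)))"

definition alpha_winning_on :: "real set \<Rightarrow> real \<Rightarrow> real set \<Rightarrow> bool" where
  "alpha_winning_on K \<alpha> S \<longleftrightarrow> (\<forall>\<beta>. 0 < \<beta> \<and> \<beta> < 1 \<longrightarrow> winning_ab_on K \<alpha> \<beta> S)"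

end

theory Submission
  imports Defs
begin

text \<open>The dangerous points at level n are p n m = \<phi>((y n + m) / t n). Alice plays against a
  potential: once Bob's radius \<rho> satisfies t n * \<rho> \<le> \<kappa>, a dangerous point near the current ball
  is a threat of weight (\<kappa> / (t n * \<rho>)) powr \<theta>, where \<theta> is chosen so that one round
  (\<rho> \<mapsto> \<alpha> * \<beta> * \<rho>) multiplies every weight by 3/2. In each round Alice finds the point around
  which the threats are heaviest and, using absolute decay, moves her centre away from it. The old
  threats that survive lie in a cluster disjoint from the heaviest one, so after rescaling they weigh
  at most 3/4 of the current bound, while lacunarity lets only boundedly many new threats appear per
  round. Hence the total weight stays below a fixed bound B. A threat heavier than B cannot exist,
  so the outcome keeps distance \<delta> / t n from every p n m, and its \<phi>-preimage lies in Etilde t y.\<close>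

lemma card_int_le_diameter:
  fixes S :: "int set" and D :: real
  assumes "0 \<le> D" and diam: "\<And>a b. a \<in> S \<Longrightarrow> b \<in> S \<Longrightarrow> real_of_int \<bar>a - b\<bar> \<le> D"
  shows "finite S \<and> real (card S) \<le> 2 * D + 1"
proof (cases "S = {}")
  case True
  then show ?thesis using \<open>0 \<le> D\<close> by simp
next
  case False
  then obtain a where a: "a \<in> S" by blast
  have sub: "S \<subseteq> {a - \<lfloor>D\<rfloor> .. a + \<lfloor>D\<rfloor>}"
  proof
    fix b assume "b \<in> S"
    then have "\<bar>b - a\<bar> \<le> \<lfloor>D\<rfloor>" using diam[of b a] a by (simp add: le_floor_iff)
    then show "b \<in> {a - \<lfloor>D\<rfloor> .. a + \<lfloor>D\<rfloor>}" by auto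
  qed
  have "card S \<le> card {a - \<lfloor>D\<rfloor> .. a + \<lfloor>D\<rfloor>}" using sub by (intro card_mono) auto
  then have "real (card S) \<le> real (nat (2 * \<lfloor>D\<rfloor> + 1))" by simp
  also have "\<dots> = 2 * real_of_int \<lfloor>D\<rfloor> + 1" using \<open>0 \<le> D\<close> by simp
  also have "\<dots> \<le> 2 * D + 1" by linarith
  finally show ?thesis using sub finite_subset by blast
qed

lemma bi_lipschitz_bounds:
  assumes "bi_lipschitz \<phi>"
  obtains L where "1 \<le> L" and "\<And>a b. \<bar>a - b\<bar> \<le> L * \<bar>\<phi> a - \<phi> b\<bar>"
    and "\<And>a b. \<bar>\<phi> a - \<phi> b\<bar> \<le> L * \<bar>a - b\<bar>"
proof -
  obtain L where L: "1 \<le> L" and bl: "\<And>a b. a \<noteq> b \<Longrightarrow>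
      1 / L \<le> \<bar>\<phi> a - \<phi> b\<bar> / \<bar>a - b\<bar> \<and> \<bar>\<phi> a - \<phi> b\<bar> / \<bar>a - b\<bar> \<le> L"
    using assms unfolding bi_lipschitz_def by blast
  have "\<bar>a - b\<bar> \<le> L * \<bar>\<phi> a - \<phi> b\<bar> \<and> \<bar>\<phi> a - \<phi> b\<bar> \<le> L * \<bar>a - b\<bar>" for a b
    using bl[of a b] L by (cases "a = b") (auto simp: field_simps)
  then show thesis using that L by blast
qed

lemma expanding_continuous_surj:
  fixes \<phi> :: "real \<Rightarrow> real"
  assumes "0 < L" and "continuous_on UNIV \<phi>" and expand: "\<And>a b. \<bar>a - b\<bar> \<le> L * \<bar>\<phi> a - \<phi> b\<bar>"
  shows "surj \<phi>"
proof -
  have "inj \<phi>"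
  proof (rule injI)
    fix a b assume "\<phi> a = \<phi> b"
    then show "a = b" using expand[of a b] by simp
  qed
  have "v \<in> range \<phi>" for v
  proof -
    define T where "T = L * (\<bar>v - \<phi> 0\<bar> + 1)"
    have "0 < T" unfolding T_def using \<open>0 < L\<close> by (simp add: add_pos_nonneg)
    have far: "\<bar>v - \<phi> 0\<bar> + 1 \<le> \<bar>\<phi> s - \<phi> 0\<bar>" if "\<bar>s\<bar> = T" for s
      using expand[of s 0] that \<open>0 < L\<close> unfolding T_def by (simp add: mult_le_cancel_left_pos)
    have cont: "continuous_on {a..b} \<phi>" for a b
      using assms(2) by (rule continuous_on_subset) simp
    have "(\<phi> (-T) < \<phi> 0 \<and> \<phi> 0 < \<phi> T) \<or> (\<phi> T < \<phi> 0 \<and> \<phi> 0 < \<phi> (-T))"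
      using continuous_inj_imp_mono[of "-T" 0 T \<phi>] \<open>0 < T\<close> cont \<open>inj \<phi>\<close>
      by (auto simp: inj_on_def inj_def)
    then show ?thesis
    proof
      assume "\<phi> (-T) < \<phi> 0 \<and> \<phi> 0 < \<phi> T"
      then have "\<phi> (-T) \<le> v" "v \<le> \<phi> T" using far[of T] far[of "-T"] \<open>0 < T\<close> by auto
      then show ?thesis using IVT'[of \<phi> "-T" v T] \<open>0 < T\<close> cont by force
    next
      assume "\<phi> T < \<phi> 0 \<and> \<phi> 0 < \<phi> (-T)"
      then have "\<phi> T \<le> v" "v \<le> \<phi> (-T)" using far[of T] far[of "-T"] \<open>0 < T\<close> by auto
      then show ?thesis using IVT2'[of \<phi> T v "-T"] \<open>0 < T\<close> cont by force
    qed
  qed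
  then show ?thesis by blast
qed

text \<open>Otherwise the support points of cball x r would all lie in cball w (\<epsilon> * r), so up to a null set
  the ball would be covered by the small ball, contradicting the decay estimate.\<close>

lemma abs_decaying_escape:
  assumes "abs_decaying \<mu> C \<gamma>"
  obtains \<rho>0 where "0 < \<rho>0" and "\<And>x r w \<epsilon>. x \<in> msupp \<mu> \<Longrightarrow> 0 < r \<Longrightarrow> r \<le> \<rho>0 \<Longrightarrow>
      0 < \<epsilon> \<Longrightarrow> C * \<epsilon> powr \<gamma> \<le> 1 \<Longrightarrow> \<exists>z\<in>msupp \<mu>. \<bar>z - x\<bar> \<le> r \<and> \<epsilon> * r \<le> \<bar>z - w\<bar>"
proof -
  obtain \<rho>0 where "0 < \<rho>0" and sets: "sets \<mu> = sets borel" and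
    decay: "\<And>\<rho> x w \<epsilon>. 0 < \<rho> \<Longrightarrow> \<rho> \<le> \<rho>0 \<Longrightarrow> x \<in> msupp \<mu> \<Longrightarrow> 0 < \<epsilon> \<Longrightarrow>
      emeasure \<mu> (cball x \<rho> \<inter> cball w (\<epsilon> * \<rho>)) < ennreal (C * \<epsilon> powr \<gamma>) * emeasure \<mu> (cball x \<rho>)"
    using assms unfolding abs_decaying_def locally_finite_borel_def by blast
  have escape: "\<exists>z\<in>msupp \<mu>. \<bar>z - x\<bar> \<le> r \<and> \<epsilon> * r \<le> \<bar>z - w\<bar>"
    if x: "x \<in> msupp \<mu>" and r: "0 < r" "r \<le> \<rho>0" and "0 < \<epsilon>" and C\<epsilon>: "C * \<epsilon> powr \<gamma> \<le> 1"
    for x r w \<epsilon>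
  proof (rule ccontr)
    assume none: "\<not> ?thesis"
    define A where "A = cball x r \<inter> {z. \<epsilon> * r \<le> \<bar>z - w\<bar>}"
    have "compact A" unfolding A_def
      by (intro compact_Int_closed compact_cball closed_Collect_le continuous_intros)
    have "\<forall>z\<in>A. \<exists>U. open U \<and> z \<in> U \<and> emeasure \<mu> U = 0"
      using none unfolding A_def msupp_def by (auto simp: dist_real_def abs_minus_commute)
    then obtain U where U: "\<And>z. z \<in> A \<Longrightarrow> open (U z) \<and> z \<in> U z \<and> emeasure \<mu> (U z) = 0"
      by metis
    obtain F where F: "F \<subseteq> A" "finite F" "A \<subseteq> (\<Union>z\<in>F. U z)"
      using compactE_image[OF \<open>compact A\<close>, of A U] U by blast
    have null: "(\<Union>z\<in>F. U z) \<in> null_sets \<mu>"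
      using F U by (intro null_sets_UN') (auto simp: countable_finite sets null_sets_def)
    then have "emeasure \<mu> A \<le> emeasure \<mu> (\<Union>z\<in>F. U z)"
      using F(3) by (intro emeasure_mono) auto
    then have A_null: "emeasure \<mu> A = 0" using null by (metis le_zero_eq null_setsD1)
    have A_sets: "A \<in> sets \<mu>" unfolding sets A_def
      by (intro borel_closed closed_Int closed_cball closed_Collect_le continuous_intros)
    let ?E = "emeasure \<mu> (cball x r)"
    have "?E \<le> emeasure \<mu> ((cball x r \<inter> cball w (\<epsilon> * r)) \<union> A)"
      using A_sets by (intro emeasure_mono) (auto simp: sets A_def dist_real_def)
    also have "\<dots> \<le> emeasure \<mu> (cball x r \<inter> cball w (\<epsilon> * r)) + emeasure \<mu> A"
      using A_sets by (intro emeasure_subadditive) (auto simp: sets)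
    also have "\<dots> < ennreal (C * \<epsilon> powr \<gamma>) * ?E"
      using decay[OF r x \<open>0 < \<epsilon>\<close>, of w] A_null by (simp add: mult.commute)
    also have "\<dots> \<le> ?E"
      using C\<epsilon> mult_right_mono[of "ennreal (C * \<epsilon> powr \<gamma>)" 1 ?E] by simp
    finally show False by simp
  qed
  show thesis using that[OF \<open>0 < \<rho>0\<close> escape] .
qed

lemma abs_decaying_escape_const:
  assumes "abs_decaying \<mu> C \<gamma>" and "msupp \<mu> \<noteq> {}"
  obtains \<rho>0 where "0 < \<rho>0" and "(1 / (3 * C)) powr (1 / \<gamma>) \<le> 1"
    and "\<And>x r w. x \<in> msupp \<mu> \<Longrightarrow> 0 < r \<Longrightarrow> r \<le> \<rho>0 \<Longrightarrow>
      \<exists>z\<in>msupp \<mu>. \<bar>z - x\<bar> \<le> r \<and> (1 / (3 * C)) powr (1 / \<gamma>) * r \<le> \<bar>z - w\<bar>"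
proof -
  define \<epsilon> where "\<epsilon> = (1 / (3 * C)) powr (1 / \<gamma>)"
  have "0 < C" "0 < \<gamma>" using assms(1) unfolding abs_decaying_def by auto
  then have "C * \<epsilon> powr \<gamma> \<le> 1" "0 < \<epsilon>" unfolding \<epsilon>_def by (simp_all add: powr_powr)
  obtain \<rho>0 where "0 < \<rho>0" and escape: "\<And>x r w. x \<in> msupp \<mu> \<Longrightarrow> 0 < r \<Longrightarrow> r \<le> \<rho>0 \<Longrightarrow>
      \<exists>z\<in>msupp \<mu>. \<bar>z - x\<bar> \<le> r \<and> \<epsilon> * r \<le> \<bar>z - w\<bar>"
    using abs_decaying_escape[OF assms(1)] \<open>0 < \<epsilon>\<close> \<open>C * \<epsilon> powr \<gamma> \<le> 1\<close> by metis
  obtain x where "x \<in> msupp \<mu>" using assms(2) by blast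
  then obtain z where "\<bar>z - x\<bar> \<le> \<rho>0" "\<epsilon> * \<rho>0 \<le> \<bar>z - x\<bar>" using escape[of x \<rho>0 x] \<open>0 < \<rho>0\<close> by auto
  then have "\<epsilon> * \<rho>0 \<le> 1 * \<rho>0" by linarith
  then have "\<epsilon> \<le> 1" using \<open>0 < \<rho>0\<close> by (rule mult_right_le_imp_le)
  then show thesis using that \<open>0 < \<rho>0\<close> escape unfolding \<epsilon>_def by blast
qed

lemma winning_ab_on_empty: "winning_ab_on {} \<alpha> \<beta> S"
  unfolding winning_ab_on_def Let_def by (auto simp: bob_legal_def)

lemma winning_ab_on_mono:
  assumes "winning_ab_on K \<alpha> \<beta> S" and "S \<subseteq> T"
  shows "winning_ab_on K \<alpha> \<beta> T"
  using assms unfolding winning_ab_on_def Let_def by blast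

locale lacunary_seq =
  fixes t :: "nat \<Rightarrow> real" and q :: real
  assumes t_pos: "0 < t n" and ratio_gt_1: "1 < q" and ratio_le: "q * t n \<le> t (Suc n)"
begin

lemma t_geometric: "q ^ k * t n \<le> t (n + k)"
proof (induction k)
  case (Suc k)
  have "q ^ Suc k * t n = q * (q ^ k * t n)" by simp
  also have "\<dots> \<le> q * t (n + k)" using Suc ratio_gt_1 by (intro mult_left_mono) auto
  also have "\<dots> \<le> t (n + Suc k)" using ratio_le[of "n + k"] by simp
  finally show ?case .
qed simp

lemma t_mono:
  assumes "m \<le> n"
  shows "t m \<le> t n"
proof -
  have "1 * t m \<le> q ^ (n - m) * t m"
    using ratio_gt_1 t_pos[of m] by (intro mult_right_mono one_le_power) auto
  also have "\<dots> \<le> t n" using t_geometric[of "n - m" m] assms by simp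
  finally show ?thesis by simp
qed

lemma finite_t_le: "finite {n. t n \<le> T}"
proof -
  obtain N where N: "T / t 0 < q ^ N" using real_arch_pow[OF ratio_gt_1] by blast
  have "n < N" if "t n \<le> T" for n
  proof (rule ccontr)
    assume "\<not> n < N"
    then have "q ^ N * t 0 \<le> q ^ n * t 0"
      using ratio_gt_1 t_pos[of 0] by (intro mult_right_mono power_increasing) auto
    also have "\<dots> \<le> T" using t_geometric[of n 0] that by simp
    finally have "q ^ N * t 0 \<le> T" .
    moreover have "T < q ^ N * t 0" using N t_pos[of 0] by (simp add: pos_divide_less_eq)
    ultimately show False by linarith
  qed
  then have "{n. t n \<le> T} \<subseteq> {..<N}" by blast
  then show ?thesis using finite_subset by blast
qed

lemma card_t_window:
  assumes "0 < l" "l < 1"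
  obtains M :: nat where "\<And>a. 0 < a \<Longrightarrow> card {n. a < t n \<and> t n \<le> a / l} \<le> M"
proof -
  obtain M where M: "1 / l < q ^ M" using real_arch_pow[OF ratio_gt_1] by blast
  have "card {n. a < t n \<and> t n \<le> a / l} \<le> M" for a
  proof (cases "{n. a < t n \<and> t n \<le> a / l} = {}")
    case False
    let ?S = "{n. a < t n \<and> t n \<le> a / l}"
    have "finite ?S" by (rule finite_subset[OF _ finite_t_le[of "a / l"]]) auto
    define n0 where "n0 = Min ?S"
    have n0: "n0 \<in> ?S" unfolding n0_def using \<open>finite ?S\<close> False by (rule Min_in)
    have "n < n0 + M" if "n \<in> ?S" for n
    proof (rule ccontr)
      assume "\<not> n < n0 + M"
      then obtain k where k: "n = n0 + k" "M \<le> k" using le_Suc_ex by force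
      have "1 / l * t n0 < q ^ M * t n0" using M t_pos[of n0] by (rule mult_strict_right_mono)
      also have "\<dots> \<le> q ^ k * t n0"
        using k ratio_gt_1 t_pos[of n0] by (intro mult_right_mono power_increasing) auto
      also have "\<dots> \<le> t n" using t_geometric[of k n0] k by simp
      also have "\<dots> \<le> a / l" using that by simp
      finally have "t n0 < a" using assms by (simp add: divide_less_cancel)
      with n0 show False by simp
    qed
    moreover have "n0 \<le> n" if "n \<in> ?S" for n unfolding n0_def using \<open>finite ?S\<close> that by (rule Min_le)
    ultimately have "?S \<subseteq> {n0..<n0 + M}" by auto
    then show ?thesis using card_mono[of "{n0..<n0 + M}" ?S] by simp
  next
    case True
    show ?thesis unfolding True by simp
  qed
  then show thesis using that by blast
qed

end

lemma lacunary_imp_lacunary_seq: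
  assumes "lacunary t"
  shows "lacunary_seq t (INF n. t (Suc n) / t n)"
proof unfold_locales
  show t_pos: "0 < t n" for n using assms unfolding lacunary_def by blast
  show "1 < (INF n. t (Suc n) / t n)" using assms unfolding lacunary_def by blast
  have "bdd_below (range (\<lambda>n. t (Suc n) / t n))"
    by (rule bdd_belowI[of _ 0]) (auto intro!: less_imp_le divide_pos_pos t_pos)
  then have "(INF n. t (Suc n) / t n) \<le> t (Suc n) / t n" for n by (rule cINF_lower) simp
  then show "(INF n. t (Suc n) / t n) * t n \<le> t (Suc n)" for n
    using t_pos[of n] by (simp add: le_divide_eq)
qed

text \<open>The escape property is all that is used of the measure: it is the absolute decay of \<mu>
  applied to a single ball, with K the support.\<close>

locale avoidance_game = lacunary_seq t q
  for t :: "nat \<Rightarrow> real" and q :: real +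
  fixes K :: "real set" and \<rho>0 \<epsilon> \<alpha> \<beta> L :: real and p :: "nat \<Rightarrow> int \<Rightarrow> real"
  assumes escape: "x \<in> K \<Longrightarrow> 0 < r \<Longrightarrow> r \<le> \<rho>0 \<Longrightarrow> \<exists>z\<in>K. \<bar>z - x\<bar> \<le> r \<and> \<epsilon> * r \<le> \<bar>z - w\<bar>"
    and \<rho>0_pos: "0 < \<rho>0" and \<epsilon>_le_1: "\<epsilon> \<le> 1"
    and \<alpha>_pos: "0 < \<alpha>" and \<alpha>_le: "\<alpha> \<le> \<epsilon> / 4"
    and \<beta>_pos: "0 < \<beta>" and \<beta>_lt_1: "\<beta> < 1"
    and L_pos: "0 < L"
    and separated: "real_of_int \<bar>m - m'\<bar> \<le> L * t n * \<bar>p n m - p n m'\<bar>"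
begin

definition "shrink = \<alpha> * \<beta>"
definition "\<theta> = ln (3/2) / ln (1 / shrink)"
definition "\<eta> = (1 - \<beta>) / 4"
text \<open>Since \<kappa> \<le> 2 * \<rho>0 * t n, threats only exist while \<rho> / 2 \<le> \<rho>0, i.e. while Alice can escape.\<close>
definition "\<kappa> = 2 * \<rho>0 * t 0"

definition "weight \<rho> n = (\<kappa> / (t n * \<rho>)) powr \<theta>"
definition "total_weight \<rho> S = (\<Sum>nm\<in>S. weight \<rho> (fst nm))"

definition "threats \<delta> x \<rho> = {(n, m). t n * \<rho> \<le> \<kappa> \<and> \<bar>p n m - x\<bar> \<le> \<rho> + \<delta> / t n}"
definition "cluster \<delta> x \<rho> w = threats \<delta> x \<rho> \<inter> {(n, m). \<bar>p n m - w\<bar> \<le> shrink * (1 + \<eta>) * \<rho>}"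

lemma \<alpha>_le_quarter: "\<alpha> \<le> 1/4"
  using \<alpha>_le \<epsilon>_le_1 by simp

lemma shrink_pos: "0 < shrink"
  unfolding shrink_def using \<alpha>_pos \<beta>_pos by simp

lemma shrink_lt_1: "shrink < 1"
  unfolding shrink_def using mult_strict_left_mono[OF \<beta>_lt_1 \<alpha>_pos] \<alpha>_le_quarter by simp

lemma \<eta>_pos: "0 < \<eta>"
  using \<beta>_lt_1 unfolding \<eta>_def by simp

lemma shrink_margin: "shrink * (1 + 2 * \<eta>) < \<alpha>"
proof -
  have "\<beta> * (1 + 2 * \<eta>) = \<beta> + (\<beta> / 2) * (1 - \<beta>)" by (simp add: \<eta>_def field_simps)
  also have "\<dots> < \<beta> + 1 * (1 - \<beta>)" using \<beta>_pos \<beta>_lt_1 by (intro add_strict_left_mono mult_strict_right_mono) auto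
  finally show ?thesis using \<alpha>_pos mult_strict_left_mono[of "\<beta> * (1 + 2 * \<eta>)" 1 \<alpha>]
    unfolding shrink_def by (simp add: mult.assoc)
qed

lemma \<theta>_pos: "0 < \<theta>"
  unfolding \<theta>_def using shrink_pos shrink_lt_1 by (simp add: divide_pos_pos)

lemma inverse_shrink_powr_\<theta>: "(1 / shrink) powr \<theta> = 3/2"
  unfolding \<theta>_def powr_def using shrink_pos shrink_lt_1 by simp

lemma \<kappa>_pos: "0 < \<kappa>"
  unfolding \<kappa>_def using \<rho>0_pos t_pos[of 0] by simp

lemma \<kappa>_le: "\<kappa> \<le> 2 * \<rho>0 * t n"
  unfolding \<kappa>_def using \<rho>0_pos t_mono[of 0 n] by simp

lemma weight_shrink:
  assumes "0 < \<rho>"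
  shows "weight (shrink * \<rho>) n = 3/2 * weight \<rho> n"
proof -
  have scale: "\<kappa> / (t n * (shrink * \<rho>)) = (1 / shrink) * (\<kappa> / (t n * \<rho>))" by simp
  show ?thesis unfolding weight_def scale
    by (subst powr_mult) (use \<kappa>_pos t_pos[of n] shrink_pos assms in \<open>simp_all add: inverse_shrink_powr_\<theta>\<close>)
qed

lemma level_card:
  assumes "0 \<le> R"
  shows "finite {m. \<bar>p n m - x\<bar> \<le> R} \<and> real (card {m. \<bar>p n m - x\<bar> \<le> R}) \<le> 4 * L * t n * R + 1"
proof -
  have "real_of_int \<bar>a - b\<bar> \<le> 2 * L * t n * R" if "\<bar>p n a - x\<bar> \<le> R" "\<bar>p n b - x\<bar> \<le> R" for a b
  proof -
    have "L * t n * \<bar>p n a - p n b\<bar> \<le> L * t n * (2 * R)"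
      using that L_pos t_pos[of n] by (intro mult_left_mono) auto
    then show ?thesis using separated[of a b n] by simp
  qed
  then show ?thesis using card_int_le_diameter[of "2 * L * t n * R" "{m. \<bar>p n m - x\<bar> \<le> R}"]
    assms L_pos t_pos[of n] by simp
qed

lemma finite_threats:
  assumes "0 < \<rho>" "0 \<le> \<delta>"
  shows "finite (threats \<delta> x \<rho>)"
proof -
  have sub: "threats \<delta> x \<rho> \<subseteq> Sigma {n. t n \<le> \<kappa> / \<rho>} (\<lambda>n. {m. \<bar>p n m - x\<bar> \<le> \<rho> + \<delta> / t n})"
    unfolding threats_def using assms by (auto simp: field_simps)
  have levels_finite: "finite {m. \<bar>p n m - x\<bar> \<le> \<rho> + \<delta> / t n}" for n
    using level_card assms t_pos[of n] by simp
  have "finite (Sigma {n. t n \<le> \<kappa> / \<rho>} (\<lambda>n. {m. \<bar>p n m - x\<bar> \<le> \<rho> + \<delta> / t n}))"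
    by (intro finite_SigmaI finite_t_le levels_finite)
  with sub show ?thesis by (rule finite_subset)
qed

lemma weight_nonneg: "0 \<le> weight \<rho> n"
  unfolding weight_def by simp

lemma total_weight_mono: "finite T \<Longrightarrow> S \<subseteq> T \<Longrightarrow> total_weight \<rho> S \<le> total_weight \<rho> T"
  unfolding total_weight_def by (intro sum_mono2 weight_nonneg)

definition "heaviest \<delta> x \<rho> =
  (SOME w. \<forall>w'. total_weight \<rho> (cluster \<delta> x \<rho> w') \<le> total_weight \<rho> (cluster \<delta> x \<rho> w))"

definition "window_count = (SOME M::nat. \<forall>a>0. card {n. a < t n \<and> t n \<le> a / shrink} \<le> M)"
definition "new_threat_bound = real window_count * (8 * L * \<kappa> + 1)"

definition "admissible \<delta> B \<longleftrightarrow> 0 < \<delta> \<and> \<delta> \<le> shrink * \<kappa> \<and>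
  \<delta> \<le> \<eta> * shrink * \<kappa> / B powr (1 / \<theta>) \<and> 1 \<le> B \<and> 6 * new_threat_bound \<le> B"

lemma threat_scale_le:
  assumes "0 < \<rho>" "0 \<le> \<delta>" "(n, m) \<in> threats \<delta> x \<rho>" "total_weight \<rho> (threats \<delta> x \<rho>) \<le> B"
  shows "\<kappa> / (t n * \<rho>) \<le> B powr (1 / \<theta>)"
proof -
  have "weight \<rho> n = total_weight \<rho> {(n, m)}" unfolding total_weight_def by simp
  also have "\<dots> \<le> B"
    using assms finite_threats total_weight_mono[of "threats \<delta> x \<rho>" "{(n, m)}" \<rho>] by auto
  finally have "((\<kappa> / (t n * \<rho>)) powr \<theta>) powr (1 / \<theta>) \<le> B powr (1 / \<theta>)"
    unfolding weight_def using \<theta>_pos by (intro powr_mono2) auto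
  then show ?thesis using \<theta>_pos \<kappa>_pos t_pos[of n] assms(1) by (simp add: powr_powr)
qed

lemma threat_margin_le:
  assumes "0 < \<rho>" "admissible \<delta> B" "(n, m) \<in> threats \<delta> x \<rho>"
    and "total_weight \<rho> (threats \<delta> x \<rho>) \<le> B"
  shows "\<delta> / t n \<le> \<eta> * shrink * \<rho>"
proof -
  let ?b = "B powr (1 / \<theta>)"
  have "0 < ?b" using assms(2) unfolding admissible_def by simp
  have "\<kappa> \<le> ?b * (t n * \<rho>)"
    using threat_scale_le[of \<rho> \<delta> n m x B] assms t_pos[of n]
    by (simp add: admissible_def divide_le_eq mult.commute)
  then have "\<eta> * shrink * \<kappa> \<le> \<eta> * shrink * (?b * (t n * \<rho>))"
    using \<eta>_pos shrink_pos by (intro mult_left_mono) auto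
  moreover have "\<delta> * ?b \<le> \<eta> * shrink * \<kappa>"
    using assms(2) \<open>0 < ?b\<close> unfolding admissible_def by (simp add: le_divide_eq)
  ultimately have "\<delta> * ?b \<le> (\<eta> * shrink * \<rho> * t n) * ?b" by (simp add: mult_ac)
  then have "\<delta> \<le> \<eta> * shrink * \<rho> * t n" using \<open>0 < ?b\<close> by simp
  then show ?thesis using t_pos[of n] by (simp add: divide_le_eq)
qed

lemma heaviest_max:
  assumes "0 < \<rho>" "0 \<le> \<delta>"
  shows "total_weight \<rho> (cluster \<delta> x \<rho> w) \<le> total_weight \<rho> (cluster \<delta> x \<rho> (heaviest \<delta> x \<rho>))"
proof -
  let ?f = "\<lambda>w. total_weight \<rho> (cluster \<delta> x \<rho> w)"
  have "cluster \<delta> x \<rho> w \<in> Pow (threats \<delta> x \<rho>)" for w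
    unfolding cluster_def by simp
  then have "range ?f \<subseteq> total_weight \<rho> ` Pow (threats \<delta> x \<rho>)" by blast
  then have fin: "finite (range ?f)" using finite_threats[OF assms] finite_subset by blast
  have "Max (range ?f) \<in> range ?f" using fin by (intro Max_in) auto
  then obtain w0 where w0: "?f w0 = Max (range ?f)" by auto
  have "?f w' \<le> ?f w0" for w' unfolding w0 using fin by (intro Max_ge) auto
  then have "\<exists>w. \<forall>w'. ?f w' \<le> ?f w" by blast
  then have "\<forall>w'. ?f w' \<le> ?f (heaviest \<delta> x \<rho>)" unfolding heaviest_def by (rule someI_ex)
  then show ?thesis by blast
qed

lemma card_window_le_window_count:
  assumes "0 < a"
  shows "card {n. a < t n \<and> t n \<le> a / shrink} \<le> window_count"
proof -
  obtain M where "\<And>a. 0 < a \<Longrightarrow> card {n. a < t n \<and> t n \<le> a / shrink} \<le> M"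
    using card_t_window[OF shrink_pos shrink_lt_1] by blast
  then have "\<forall>a>0. card {n. a < t n \<and> t n \<le> a / shrink} \<le> window_count"
    unfolding window_count_def by (intro someI_ex[of "\<lambda>M. \<forall>a>0. card {n. a < t n \<and> t n \<le> a / shrink} \<le> M"]) blast
  then show ?thesis using assms by blast
qed

lemma card_new_threats:
  assumes "0 < \<rho>" "0 \<le> \<delta>" "\<delta> \<le> shrink * \<kappa>"
  shows "real (card (threats \<delta> x (shrink * \<rho>) - {(n, m). t n * \<rho> \<le> \<kappa>})) \<le> new_threat_bound"
proof -
  define S where "S = {n. \<kappa> / \<rho> < t n \<and> t n \<le> (\<kappa> / \<rho>) / shrink}"
  define F where "F n = {m. \<bar>p n m - x\<bar> \<le> 2 * shrink * \<rho>}" for n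
  have "n \<in> S \<and> m \<in> F n" if "(n, m) \<in> threats \<delta> x (shrink * \<rho>)" and new: "\<not> t n * \<rho> \<le> \<kappa>" for n m
  proof -
    have active: "t n * (shrink * \<rho>) \<le> \<kappa>" and near: "\<bar>p n m - x\<bar> \<le> shrink * \<rho> + \<delta> / t n"
      using that(1) unfolding threats_def by auto
    have "n \<in> S" using active new assms(1) shrink_pos
      unfolding S_def by (simp add: field_simps)
    moreover have "shrink * \<kappa> \<le> shrink * (t n * \<rho>)" using new shrink_pos by simp
    then have "\<delta> \<le> shrink * \<rho> * t n" using assms(3) by (simp add: mult_ac)
    then have "\<delta> / t n \<le> shrink * \<rho>" using t_pos[of n] by (simp add: divide_le_eq)
    then have "m \<in> F n" using near unfolding F_def by simp
    ultimately show ?thesis by blast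
  qed
  then have sub: "threats \<delta> x (shrink * \<rho>) - {(n, m). t n * \<rho> \<le> \<kappa>} \<subseteq> Sigma S F" by auto
  have F: "finite (F n) \<and> real (card (F n)) \<le> 8 * L * \<kappa> + 1" if "n \<in> S" for n
  proof -
    have "t n * shrink * \<rho> \<le> \<kappa>" using that assms(1) shrink_pos unfolding S_def by (simp add: field_simps)
    then have "4 * L * t n * (2 * shrink * \<rho>) \<le> 8 * L * \<kappa>"
      using L_pos mult_left_mono[of "t n * shrink * \<rho>" \<kappa> "8 * L"] by (simp add: mult_ac)
    then show ?thesis using level_card[of "2 * shrink * \<rho>" n x] assms(1) shrink_pos
      unfolding F_def by simp
  qed
  have "finite S" unfolding S_def by (rule finite_subset[OF _ finite_t_le]) auto
  have "card S \<le> window_count" unfolding S_def using \<kappa>_pos assms(1) by (intro card_window_le_window_count) simp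
  have "finite (Sigma S F)" using \<open>finite S\<close> F by (intro finite_SigmaI) auto
  then have "card (threats \<delta> x (shrink * \<rho>) - {(n, m). t n * \<rho> \<le> \<kappa>}) \<le> card (Sigma S F)"
    using sub by (rule card_mono)
  also have "\<dots> = (\<Sum>n\<in>S. card (F n))" using \<open>finite S\<close> F by (intro card_SigmaI) auto
  finally have "real (card (threats \<delta> x (shrink * \<rho>) - {(n, m). t n * \<rho> \<le> \<kappa>}))
      \<le> (\<Sum>n\<in>S. real (card (F n)))" by (metis of_nat_mono of_nat_sum)
  also have "\<dots> \<le> real (card S) * (8 * L * \<kappa> + 1)" using F by (intro sum_bounded_above) auto
  also have "\<dots> \<le> new_threat_bound"
    unfolding new_threat_bound_def using \<open>card S \<le> window_count\<close> L_pos \<kappa>_pos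
    by (intro mult_right_mono) auto
  finally show ?thesis .
qed

lemma threats_empty:
  assumes "2 * \<rho>0 < \<rho>"
  shows "threats \<delta> x \<rho> = {}"
proof -
  have "\<kappa> < t n * \<rho>" for n
  proof -
    have "2 * \<rho>0 * t n < \<rho> * t n" using assms t_pos[of n] by simp
    then show ?thesis using \<kappa>_le[of n] by (simp add: mult.commute)
  qed
  then show ?thesis unfolding threats_def by (auto simp: not_le[symmetric])
qed

lemma threats_shrink_subset:
  assumes "\<bar>x' - x\<bar> \<le> \<rho> - shrink * \<rho>"
  shows "threats \<delta> x' (shrink * \<rho>) \<inter> {(n, m). t n * \<rho> \<le> \<kappa>} \<subseteq> threats \<delta> x \<rho>"
  using assms unfolding threats_def by auto

text \<open>The old threats all lie in the cluster around x', which is disjoint from the heaviest cluster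
  that Alice escaped from; hence they carry at most half of the current weight.\<close>

lemma old_threats_weight:
  assumes "0 < \<rho>" "admissible \<delta> B" and weight_le: "total_weight \<rho> (threats \<delta> x \<rho>) \<le> B"
    and near: "\<bar>x' - x\<bar> \<le> \<rho> - shrink * \<rho>"
    and far: "\<rho> / 2 \<le> \<rho>0 \<Longrightarrow> \<alpha> * \<rho> + shrink * \<rho> \<le> \<bar>x' - heaviest \<delta> x \<rho>\<bar>"
  shows "2 * total_weight \<rho> (threats \<delta> x' (shrink * \<rho>) \<inter> {(n, m). t n * \<rho> \<le> \<kappa>}) \<le> B"
proof -
  define Old where "Old = threats \<delta> x' (shrink * \<rho>) \<inter> {(n, m). t n * \<rho> \<le> \<kappa>}"
  have "0 \<le> \<delta>" and "1 \<le> B" using assms(2) unfolding admissible_def by auto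
  have Old_sub: "Old \<subseteq> threats \<delta> x \<rho>" unfolding Old_def using near by (rule threats_shrink_subset)
  have fin: "finite (threats \<delta> x \<rho>)" using finite_threats assms(1) \<open>0 \<le> \<delta>\<close> by blast
  show ?thesis
  proof (cases "\<rho> / 2 \<le> \<rho>0")
    case False
    then have "Old = {}" using Old_sub threats_empty[of \<rho> \<delta> x] by auto
    then show ?thesis using \<open>1 \<le> B\<close> unfolding Old_def total_weight_def by simp
  next
    case True
    define w where "w = heaviest \<delta> x \<rho>"
    have old_near: "\<bar>p n m - x'\<bar> \<le> shrink * (1 + \<eta>) * \<rho>" if "(n, m) \<in> Old" for n m
    proof -
      have "\<delta> / t n \<le> \<eta> * shrink * \<rho>"
        using threat_margin_le[OF assms(1,2) _ weight_le] that Old_sub by blast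
      then show ?thesis using that unfolding Old_def threats_def by (simp add: algebra_simps)
    qed
    have "Old \<subseteq> cluster \<delta> x \<rho> x'" using Old_sub old_near unfolding cluster_def by auto
    then have "total_weight \<rho> Old \<le> total_weight \<rho> (cluster \<delta> x \<rho> w)"
      using heaviest_max[OF assms(1) \<open>0 \<le> \<delta>\<close>, of x x'] fin
        total_weight_mono[of "cluster \<delta> x \<rho> x'" Old \<rho>]
      unfolding w_def cluster_def by auto
    moreover have "Old \<inter> cluster \<delta> x \<rho> w = {}"
    proof (rule ccontr)
      assume "Old \<inter> cluster \<delta> x \<rho> w \<noteq> {}"
      then obtain n m where "(n, m) \<in> Old" "\<bar>p n m - w\<bar> \<le> shrink * (1 + \<eta>) * \<rho>"
        unfolding cluster_def by auto
      then have "\<alpha> * \<rho> + shrink * \<rho> \<le> 2 * (shrink * (1 + \<eta>) * \<rho>)"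
        using old_near far[OF True] unfolding w_def by fastforce
      then have "\<alpha> * \<rho> \<le> (shrink * (1 + 2 * \<eta>)) * \<rho>" by (simp add: algebra_simps)
      then show False using shrink_margin assms(1) by simp
    qed
    then have "total_weight \<rho> Old + total_weight \<rho> (cluster \<delta> x \<rho> w)
        = total_weight \<rho> (Old \<union> cluster \<delta> x \<rho> w)"
      using fin Old_sub unfolding total_weight_def cluster_def
      by (intro sum.union_disjoint[symmetric]) (auto intro: finite_subset)
    also have "\<dots> \<le> B"
      using fin Old_sub weight_le total_weight_mono[of "threats \<delta> x \<rho>" "Old \<union> cluster \<delta> x \<rho> w" \<rho>]
      unfolding cluster_def by auto
    finally show ?thesis unfolding Old_def by linarith
  qed
qed

lemma new_threats_weight:
  assumes "0 < \<rho>" "0 \<le> \<delta>" "\<delta> \<le> shrink * \<kappa>"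
  shows "total_weight (shrink * \<rho>) (threats \<delta> x (shrink * \<rho>) - {(n, m). t n * \<rho> \<le> \<kappa>})
    \<le> 3/2 * new_threat_bound"
proof -
  have "weight (shrink * \<rho>) n \<le> 3/2" if "\<kappa> < t n * \<rho>" for n
  proof -
    have "\<kappa> / (t n * (shrink * \<rho>)) \<le> 1 / shrink"
      using that shrink_pos assms(1) t_pos[of n] by (simp add: field_simps)
    then show ?thesis
      unfolding weight_def inverse_shrink_powr_\<theta>[symmetric]
      using \<theta>_pos \<kappa>_pos t_pos[of n] shrink_pos assms(1) by (intro powr_mono2) auto
  qed
  then have "total_weight (shrink * \<rho>) (threats \<delta> x (shrink * \<rho>) - {(n, m). t n * \<rho> \<le> \<kappa>})
      \<le> real (card (threats \<delta> x (shrink * \<rho>) - {(n, m). t n * \<rho> \<le> \<kappa>})) * (3/2)"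
    unfolding total_weight_def by (intro sum_bounded_above) auto
  also have "\<dots> \<le> new_threat_bound * (3/2)"
    using card_new_threats[OF assms] by (intro mult_right_mono) auto
  finally show ?thesis by simp
qed

lemma threats_weight_step:
  assumes "0 < \<rho>" "admissible \<delta> B" "total_weight \<rho> (threats \<delta> x \<rho>) \<le> B"
    and "\<bar>x' - x\<bar> \<le> \<rho> - shrink * \<rho>"
    and "\<rho> / 2 \<le> \<rho>0 \<Longrightarrow> \<alpha> * \<rho> + shrink * \<rho> \<le> \<bar>x' - heaviest \<delta> x \<rho>\<bar>"
  shows "total_weight (shrink * \<rho>) (threats \<delta> x' (shrink * \<rho>)) \<le> B"
proof -
  let ?Old = "threats \<delta> x' (shrink * \<rho>) \<inter> {(n, m). t n * \<rho> \<le> \<kappa>}"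
  let ?New = "threats \<delta> x' (shrink * \<rho>) - {(n, m). t n * \<rho> \<le> \<kappa>}"
  have \<delta>: "0 \<le> \<delta>" "\<delta> \<le> shrink * \<kappa>" and B: "6 * new_threat_bound \<le> B"
    using assms(2) unfolding admissible_def by auto
  have "finite (threats \<delta> x' (shrink * \<rho>))" using finite_threats shrink_pos assms(1) \<delta> by simp
  then have "total_weight (shrink * \<rho>) (threats \<delta> x' (shrink * \<rho>))
      = total_weight (shrink * \<rho>) ?Old + total_weight (shrink * \<rho>) ?New"
    unfolding total_weight_def by (rule sum.Int_Diff)
  also have "total_weight (shrink * \<rho>) ?Old = 3/2 * total_weight \<rho> ?Old"
    unfolding total_weight_def sum_distrib_left by (rule sum.cong[OF refl]) (simp add: weight_shrink[OF assms(1)])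
  also have "3/2 * total_weight \<rho> ?Old + total_weight (shrink * \<rho>) ?New \<le> 3/4 * B + 3/2 * new_threat_bound"
    using old_threats_weight[of \<rho> \<delta> B x x', OF assms(1-4) assms(5)]
      new_threats_weight[OF assms(1) \<delta>, of x'] by linarith
  also have "\<dots> \<le> B" using B by linarith
  finally show ?thesis .
qed

lemma threats_weight_invariant:
  assumes "admissible \<delta> B" "0 < R 0" and R_Suc: "\<And>k. R (Suc k) = shrink * R k"
    and "total_weight (R 0) (threats \<delta> (X 0) (R 0)) \<le> B"
    and "\<And>k. \<bar>X (Suc k) - X k\<bar> \<le> R k - shrink * R k"
    and "\<And>k. R k / 2 \<le> \<rho>0 \<Longrightarrow> \<alpha> * R k + shrink * R k \<le> \<bar>X (Suc k) - heaviest \<delta> (X k) (R k)\<bar>"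
  shows "total_weight (R k) (threats \<delta> (X k) (R k)) \<le> B"
proof (induction k)
  case (Suc k)
  have "0 < R k" by (induction k) (use assms(2) R_Suc shrink_pos in auto)
  then show ?case
    unfolding R_Suc using threats_weight_step[OF _ assms(1) Suc assms(5,6)] by blast
qed (fact assms(4))

lemma threats_avoided:
  assumes "admissible \<delta> B" "0 < R 0" and R_Suc: "\<And>k. R (Suc k) = shrink * R k"
    and weight_le: "\<And>k. total_weight (R k) (threats \<delta> (X k) (R k)) \<le> B"
    and inside: "\<And>k. \<bar>x - X k\<bar> \<le> R k"
  shows "\<delta> / t n < \<bar>x - p n m\<bar>"
proof -
  let ?b = "B powr (1 / \<theta>)"
  have "1 \<le> ?b" using assms(1) \<theta>_pos unfolding admissible_def by (simp add: ge_one_powr_ge_zero)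
  have R: "R k = R 0 * shrink ^ k" for k by (induction k) (simp_all add: R_Suc)
  have pos: "0 < ?b * t n * R 0" using \<open>1 \<le> ?b\<close> t_pos[of n] assms(2) by (auto intro!: mult_pos_pos)
  then have "0 < \<kappa> / (?b * t n * R 0)" using \<kappa>_pos by simp
  then obtain k where "shrink ^ k < \<kappa> / (?b * t n * R 0)"
    using real_arch_pow_inv shrink_lt_1 by blast
  then have "shrink ^ k * (?b * t n * R 0) < \<kappa>" using pos by (simp add: less_divide_eq)
  then have small: "?b * (t n * R k) < \<kappa>" using R[of k] by (simp add: mult_ac)
  have "0 < R k" using R[of k] assms(2) shrink_pos by simp
  have "(n, m) \<notin> threats \<delta> (X k) (R k)"
  proof
    assume "(n, m) \<in> threats \<delta> (X k) (R k)"
    then have "\<kappa> / (t n * R k) \<le> ?b"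
      using threat_scale_le[OF \<open>0 < R k\<close> _ _ weight_le] assms(1) unfolding admissible_def by auto
    then show False using small \<open>0 < R k\<close> t_pos[of n] by (simp add: divide_le_eq mult_ac)
  qed
  moreover have "t n * R k \<le> \<kappa>" using small \<open>1 \<le> ?b\<close> \<open>0 < R k\<close> t_pos[of n]
    by (smt (verit) mult_le_cancel_right1 mult_pos_pos)
  ultimately have "R k + \<delta> / t n < \<bar>p n m - X k\<bar>" unfolding threats_def by auto
  then show ?thesis using inside[of k] by linarith
qed

definition "alice_center \<delta> x \<rho> = (SOME z. z \<in> K \<and> \<bar>z - x\<bar> \<le> min (\<rho> / 2) \<rho>0 \<and>
  \<epsilon> * min (\<rho> / 2) \<rho>0 \<le> \<bar>z - heaviest \<delta> x \<rho>\<bar>)"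
definition "alice_move \<delta> b = (alice_center \<delta> (fst b) (snd b), \<alpha> * snd b)"

text \<open>The margin \<delta> is fixed after Bob's first ball (x, \<rho>), since the bound B must dominate the
  initial weight.\<close>
definition "weight_bound x \<rho> = max 1 (max (total_weight \<rho> (threats 1 x \<rho>)) (6 * new_threat_bound))"
definition "margin x \<rho> = min 1 (min (shrink * \<kappa>) (\<eta> * shrink * \<kappa> / weight_bound x \<rho> powr (1 / \<theta>)))"

definition "strategy bs = alice_move (margin (fst (hd bs)) (snd (hd bs))) (last bs)"

lemma alice_center_escapes:
  assumes "x \<in> K" "0 < \<rho>"
  shows "alice_center \<delta> x \<rho> \<in> K" and "\<bar>alice_center \<delta> x \<rho> - x\<bar> \<le> \<rho> / 2"
    and "\<rho> / 2 \<le> \<rho>0 \<Longrightarrow> \<epsilon> * (\<rho> / 2) \<le> \<bar>alice_center \<delta> x \<rho> - heaviest \<delta> x \<rho>\<bar>"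
proof -
  have "\<exists>z. z \<in> K \<and> \<bar>z - x\<bar> \<le> min (\<rho> / 2) \<rho>0 \<and> \<epsilon> * min (\<rho> / 2) \<rho>0 \<le> \<bar>z - heaviest \<delta> x \<rho>\<bar>"
    using escape[OF assms(1), of "min (\<rho> / 2) \<rho>0"] assms(2) \<rho>0_pos by auto
  from someI_ex[OF this] show "alice_center \<delta> x \<rho> \<in> K" "\<bar>alice_center \<delta> x \<rho> - x\<bar> \<le> \<rho> / 2"
    "\<rho> / 2 \<le> \<rho>0 \<Longrightarrow> \<epsilon> * (\<rho> / 2) \<le> \<bar>alice_center \<delta> x \<rho> - heaviest \<delta> x \<rho>\<bar>"
    unfolding alice_center_def by auto
qed

lemma margin_admissible: "admissible (margin x \<rho>) (weight_bound x \<rho>)"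
proof -
  have "1 \<le> weight_bound x \<rho>" "6 * new_threat_bound \<le> weight_bound x \<rho>"
    unfolding weight_bound_def by auto
  moreover from this have "0 < margin x \<rho>"
    unfolding margin_def using shrink_pos \<kappa>_pos \<eta>_pos by simp
  ultimately show ?thesis unfolding admissible_def by (auto simp: margin_def)
qed

lemma initial_threats_weight:
  assumes "0 < \<rho>"
  shows "total_weight \<rho> (threats (margin x \<rho>) x \<rho>) \<le> weight_bound x \<rho>"
proof -
  have "margin x \<rho> / t n \<le> 1 / t n" for n
    using t_pos[of n] by (intro divide_right_mono) (auto simp: margin_def)
  then have "threats (margin x \<rho>) x \<rho> \<subseteq> threats 1 x \<rho>"
    unfolding threats_def by clarsimp (meson add_left_mono order_trans)
  then have "total_weight \<rho> (threats (margin x \<rho>) x \<rho>) \<le> total_weight \<rho> (threats 1 x \<rho>)"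
    using finite_threats assms by (intro total_weight_mono) auto
  then show ?thesis unfolding weight_bound_def by simp
qed

lemma strategy_play: "strategy (map b [0..<Suc k]) = alice_move (margin (fst (b 0)) (snd (b 0))) (b k)"
  unfolding strategy_def by (simp add: hd_map last_map del: upt_Suc)

lemma bob_legal_center: "bob_legal K \<beta> a b k \<Longrightarrow> fst (b k) \<in> K"
  unfolding bob_legal_def by (cases k) auto

lemma bob_legal_radius:
  assumes "bob_legal K \<beta> (\<lambda>k. alice_move \<delta> (b k)) b k" "j \<le> k"
  shows "snd (b j) = snd (b 0) * shrink ^ j"
  using assms(2)
proof (induction j)
  case (Suc j)
  then have "snd (b (Suc j)) = \<beta> * (\<alpha> * snd (b j))"
    using assms(1) unfolding bob_legal_def alice_move_def by simp
  then show ?case using Suc by (simp add: shrink_def)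
qed simp

lemma alice_move_legal:
  assumes "bob_legal K \<beta> (\<lambda>k. alice_move \<delta> (b k)) b k"
  shows "alice_legal K \<alpha> (\<lambda>k. alice_move \<delta> (b k)) b k"
proof -
  define c where "c = alice_center \<delta> (fst (b k)) (snd (b k))"
  have "0 < snd (b k)"
    using bob_legal_radius[OF assms order.refl] assms shrink_pos unfolding bob_legal_def by simp
  moreover have "fst (b k) \<in> K" using assms by (rule bob_legal_center)
  ultimately have "c \<in> K" "\<bar>fst (b k) - c\<bar> \<le> snd (b k) / 2"
    using alice_center_escapes[of "fst (b k)" "snd (b k)" \<delta>] unfolding c_def by (auto simp: abs_minus_commute)
  moreover have "\<alpha> * snd (b k) \<le> snd (b k) / 2"
    using \<alpha>_le_quarter \<open>0 < snd (b k)\<close> by simp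
  ultimately show ?thesis unfolding alice_legal_def alice_move_def c_def[symmetric] by simp
qed

lemma strategy_outcome:
  assumes legal: "\<And>k. bob_legal K \<beta> (\<lambda>k. alice_move (margin (fst (b 0)) (snd (b 0))) (b k)) b k"
    and inside: "\<And>k. \<bar>x - fst (b k)\<bar> \<le> snd (b k)"
  shows "margin (fst (b 0)) (snd (b 0)) / t n < \<bar>x - p n m\<bar>"
proof -
  define \<delta> where "\<delta> = margin (fst (b 0)) (snd (b 0))"
  define X where "X k = fst (b k)" for k
  define R where "R k = snd (b k)" for k
  define Z where "Z k = alice_center \<delta> (X k) (R k)" for k
  have "0 < R 0" using legal[of 0] unfolding bob_legal_def R_def by simp
  have R: "R k = R 0 * shrink ^ k" for k
    unfolding R_def by (rule bob_legal_radius[OF legal order.refl])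
  have R_Suc: "R (Suc k) = shrink * R k" for k using R[of "Suc k"] R[of k] by simp
  have "0 < R k" for k using R[of k] \<open>0 < R 0\<close> shrink_pos by simp
  have "X k \<in> K" for k unfolding X_def using legal by (rule bob_legal_center)
  have Z: "\<bar>Z k - X k\<bar> \<le> R k / 2" "R k / 2 \<le> \<rho>0 \<Longrightarrow> \<epsilon> * (R k / 2) \<le> \<bar>Z k - heaviest \<delta> (X k) (R k)\<bar>" for k
    unfolding Z_def using alice_center_escapes \<open>X k \<in> K\<close> \<open>0 < R k\<close> by auto
  have bob_move: "\<bar>X (Suc k) - Z k\<bar> \<le> \<alpha> * R k - shrink * R k" for k
  proof -
    have "snd (b (Suc k)) + \<bar>fst (alice_move \<delta> (b k)) - fst (b (Suc k))\<bar> \<le> snd (alice_move \<delta> (b k))"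
      using legal[of "Suc k"] lessI unfolding bob_legal_def \<delta>_def by blast
    then show ?thesis using R_Suc[of k]
      unfolding alice_move_def X_def R_def Z_def by (simp add: abs_minus_commute)
  qed
  have half: "\<alpha> * R k \<le> R k / 2" and quarter: "2 * \<alpha> * R k \<le> \<epsilon> * (R k / 2)" for k
    using \<alpha>_le_quarter \<alpha>_le \<open>0 < R k\<close> by simp_all
  have step_near: "\<bar>X (Suc k) - X k\<bar> \<le> R k - shrink * R k" for k
    using Z(1)[of k] bob_move[of k] half[of k] by linarith
  have step_far: "\<alpha> * R k + shrink * R k \<le> \<bar>X (Suc k) - heaviest \<delta> (X k) (R k)\<bar>"
    if "R k / 2 \<le> \<rho>0" for k
    using Z(2)[OF that] bob_move[of k] quarter[of k] by linarith
  have \<delta>_eq: "\<delta> = margin (X 0) (R 0)" unfolding \<delta>_def X_def R_def ..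
  have adm: "admissible \<delta> (weight_bound (X 0) (R 0))" unfolding \<delta>_eq by (rule margin_admissible)
  have "total_weight (R 0) (threats \<delta> (X 0) (R 0)) \<le> weight_bound (X 0) (R 0)"
    unfolding \<delta>_eq using \<open>0 < R 0\<close> by (rule initial_threats_weight)
  then have "total_weight (R k) (threats \<delta> (X k) (R k)) \<le> weight_bound (X 0) (R 0)" for k
    using threats_weight_invariant[OF adm \<open>0 < R 0\<close> R_Suc _ step_near step_far] by blast
  moreover have "\<bar>x - X k\<bar> \<le> R k" for k unfolding X_def R_def by (rule inside)
  ultimately show ?thesis
    unfolding \<delta>_def[symmetric] by (rule threats_avoided[OF adm \<open>0 < R 0\<close> R_Suc])
qed

theorem winning_avoidance: "winning_ab_on K \<alpha> \<beta> {x. \<exists>\<delta>>0. \<forall>n m. \<delta> / t n \<le> \<bar>x - p n m\<bar>}"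
  unfolding winning_ab_on_def Let_def strategy_play
proof (intro exI[of _ strategy] allI conjI impI ballI)
  fix b k
  show "bob_legal K \<beta> (\<lambda>k. strategy (map b [0..<Suc k])) b k \<Longrightarrow>
      alice_legal K \<alpha> (\<lambda>k. strategy (map b [0..<Suc k])) b k"
    unfolding strategy_play by (rule alice_move_legal)
next
  fix b x
  assume "\<forall>k. bob_legal K \<beta> (\<lambda>k. strategy (map b [0..<Suc k])) b k"
    and "\<forall>k. \<bar>x - fst (b k)\<bar> \<le> snd (b k)"
  then have "margin (fst (b 0)) (snd (b 0)) / t n \<le> \<bar>x - p n m\<bar>" for n m
    using strategy_outcome[of b x n m] unfolding strategy_play by auto
  moreover have "0 < margin (fst (b 0)) (snd (b 0))"
    using margin_admissible unfolding admissible_def by blast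
  ultimately show "x \<in> {x. \<exists>\<delta>>0. \<forall>n m. \<delta> / t n \<le> \<bar>x - p n m\<bar>}" by blast
qed

end

lemma bi_lipschitz_surj:
  assumes "bi_lipschitz \<phi>"
  shows "surj \<phi>"
proof -
  obtain L where "1 \<le> L" and expand: "\<And>a b. \<bar>a - b\<bar> \<le> L * \<bar>\<phi> a - \<phi> b\<bar>"
    and lip: "\<And>a b. \<bar>\<phi> a - \<phi> b\<bar> \<le> L * \<bar>a - b\<bar>"
    using bi_lipschitz_bounds[OF assms] by blast
  have "lipschitz_on L UNIV \<phi>" unfolding lipschitz_on_def using lip \<open>1 \<le> L\<close> by (simp add: dist_real_def)
  then have "continuous_on UNIV \<phi>" by (rule lipschitz_on_continuous_on)
  then show ?thesis using expand \<open>1 \<le> L\<close> by (intro expanding_continuous_surj[of L]) auto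
qed

lemma expanding_grid_separated:
  fixes \<phi> :: "real \<Rightarrow> real"
  assumes "0 < s" and expand: "\<And>a b. \<bar>a - b\<bar> \<le> L * \<bar>\<phi> a - \<phi> b\<bar>"
  shows "real_of_int \<bar>m - m'\<bar> \<le> L * s * \<bar>\<phi> ((c + of_int m) / s) - \<phi> ((c + of_int m') / s)\<bar>"
proof -
  have "(c + of_int m) / s - (c + of_int m') / s = of_int (m - m') / s"
    by (simp add: diff_divide_distrib[symmetric])
  then have "real_of_int \<bar>m - m'\<bar> / s \<le> L * \<bar>\<phi> ((c + of_int m) / s) - \<phi> ((c + of_int m') / s)\<bar>"
    using expand[of "(c + of_int m) / s" "(c + of_int m') / s"] \<open>0 < s\<close> by simp
  then show ?thesis using \<open>0 < s\<close> by (simp add: pos_divide_le_eq mult_ac)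
qed

lemma avoiding_subset_image_Etilde:
  assumes t_pos: "\<And>n. 0 < t n" and "0 < L" and lip: "\<And>a b. \<bar>\<phi> a - \<phi> b\<bar> \<le> L * \<bar>a - b\<bar>"
    and "surj \<phi>"
  shows "{x. \<exists>\<delta>>0. \<forall>n m. \<delta> / t n \<le> \<bar>x - \<phi> ((y n + of_int m) / t n)\<bar>} \<subseteq> \<phi> ` Etilde t y"
proof
  fix x assume "x \<in> {x. \<exists>\<delta>>0. \<forall>n m. \<delta> / t n \<le> \<bar>x - \<phi> ((y n + of_int m) / t n)\<bar>}"
  then obtain \<delta> where "0 < \<delta>" and far: "\<And>n m. \<delta> / t n \<le> \<bar>x - \<phi> ((y n + of_int m) / t n)\<bar>" by blast
  obtain u where u: "x = \<phi> u" using \<open>surj \<phi>\<close> by blast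
  have "\<delta> / L \<le> \<bar>t n * u - y n - of_int m\<bar>" for n m
  proof -
    have "u - (y n + of_int m) / t n = (t n * u - y n - of_int m) / t n"
      using t_pos[of n] by (simp add: field_simps)
    then have "\<bar>u - (y n + of_int m) / t n\<bar> = \<bar>t n * u - y n - of_int m\<bar> / t n"
      using t_pos[of n] by simp
    then have "\<delta> / t n \<le> (L * \<bar>t n * u - y n - of_int m\<bar>) / t n"
      using far[of n m] lip[of u "(y n + of_int m) / t n"] unfolding u by simp
    then have "\<delta> \<le> L * \<bar>t n * u - y n - of_int m\<bar>" using t_pos[of n] by (simp add: divide_le_cancel)
    then show ?thesis using \<open>0 < L\<close> by (simp add: pos_divide_le_eq mult.commute)
  qed
  then have "\<delta> / L \<le> tdist (t n * u) (y n)" for n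
    unfolding tdist_def by (intro cINF_greatest) auto
  then have "\<delta> / L \<le> (INF n. tdist (t n * u) (y n))" by (intro cINF_greatest) auto
  moreover have "0 < \<delta> / L" using \<open>0 < \<delta>\<close> \<open>0 < L\<close> by simp
  ultimately have "u \<in> Etilde t y" unfolding Etilde_def by simp
  then show "x \<in> \<phi> ` Etilde t y" using u by blast
qed

theorem theorem1p1:
  fixes \<mu> :: "real measure" and C \<gamma> \<alpha> :: real
    and \<phi> :: "real \<Rightarrow> real" and y t :: "nat \<Rightarrow> real"
  assumes "abs_decaying \<mu> C \<gamma>"
    and "0 < \<alpha>" and "\<alpha> \<le> (1/4) * (1 / (3 * C)) powr (1 / \<gamma>)"
    and "bi_lipschitz \<phi>" and "lacunary t"
  shows "alpha_winning_on (msupp \<mu>) \<alpha> (\<phi> ` Etilde t y)"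
  unfolding alpha_winning_on_def
proof (intro allI impI)
  fix \<beta> :: real assume "0 < \<beta> \<and> \<beta> < 1"
  show "winning_ab_on (msupp \<mu>) \<alpha> \<beta> (\<phi> ` Etilde t y)"
  proof (cases "msupp \<mu> = {}")
    case False
    obtain \<rho>0 where "0 < \<rho>0" "(1 / (3 * C)) powr (1 / \<gamma>) \<le> 1" and escape:
      "\<And>x r w. x \<in> msupp \<mu> \<Longrightarrow> 0 < r \<Longrightarrow> r \<le> \<rho>0 \<Longrightarrow>
        \<exists>z\<in>msupp \<mu>. \<bar>z - x\<bar> \<le> r \<and> (1 / (3 * C)) powr (1 / \<gamma>) * r \<le> \<bar>z - w\<bar>"
      using abs_decaying_escape_const[OF assms(1) False] by blast
    obtain L where "1 \<le> L" and expand: "\<And>a b. \<bar>a - b\<bar> \<le> L * \<bar>\<phi> a - \<phi> b\<bar>"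
      and lip: "\<And>a b. \<bar>\<phi> a - \<phi> b\<bar> \<le> L * \<bar>a - b\<bar>"
      using bi_lipschitz_bounds[OF assms(4)] by blast
    interpret lacunary_seq t "INF n. t (Suc n) / t n" using assms(5) by (rule lacunary_imp_lacunary_seq)
    interpret avoidance_game t "INF n. t (Suc n) / t n" "msupp \<mu>" \<rho>0 "(1 / (3 * C)) powr (1 / \<gamma>)"
      \<alpha> \<beta> L "\<lambda>n m. \<phi> ((y n + of_int m) / t n)"
      using escape \<open>0 < \<rho>0\<close> \<open>(1 / (3 * C)) powr (1 / \<gamma>) \<le> 1\<close> assms(2,3) \<open>0 < \<beta> \<and> \<beta> < 1\<close> \<open>1 \<le> L\<close>
        expanding_grid_separated[OF t_pos expand]
      by unfold_locales auto
    show ?thesis using winning_avoidance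
      by (rule winning_ab_on_mono)
        (rule avoiding_subset_image_Etilde[OF t_pos _ lip bi_lipschitz_surj[OF assms(4)]], use \<open>1 \<le> L\<close> in simp)
  qed (simp add: winning_ab_on_empty)
qed

end
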